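(* Let $\mathbb{F}$ be a field, $n\ge2$ an integer and $h$ an integer with $0\le h\le n-2$. Then there exists a unital $\mathbb{F}$-algebra $\mathcal{A}$ with $\dim\mathcal{A}=n$ and $l(\mathcal{A})=2^h$.
   Context: Algebras are finite-dimensional, unital, not necessarily associative. For a finite generating set $S$ of $\mathcal{A}$, a word in $S$ is any product (with any bracketing) of finitely many elements of $S$; its length is the number of factors, and $1$ is a word of length $0$. $L_i(S)$ is the linear span of all words in $S$ of length at most $i$. The length of $S$ is $l(S)=\min\{k\ge0: L_k(S)=\mathcal{A}\}$, and $l(\mathcal{A})=\max\{l(S): S\text{ a finite generating set of }\mathcal{A}\}$. *)

theory Defs
  imports Main
begin

text \<open>An n-dimensional (not necessarily associative) algebra over a field 'a is modelled
by structure constants c i j k (e_i * e_j = sum_k c i j k e_k) on the coordinate space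
V_n = vectors nat => 'a vanishing outside {0..<n}.\<close>

definition vspace :: "nat \<Rightarrow> (nat \<Rightarrow> 'a::field) set" where
  "vspace n = {x. \<forall>k\<ge>n. x k = 0}"

definition amult :: "(nat \<Rightarrow> nat \<Rightarrow> nat \<Rightarrow> 'a::field) \<Rightarrow> nat \<Rightarrow> (nat \<Rightarrow> 'a) \<Rightarrow> (nat \<Rightarrow> 'a) \<Rightarrow> (nat \<Rightarrow> 'a)" where
  "amult c n x y = (\<lambda>k. if k < n then (\<Sum>i<n. \<Sum>j<n. x i * y j * c i j k) else 0)"

definition is_unit_of :: "(nat \<Rightarrow> nat \<Rightarrow> nat \<Rightarrow> 'a::field) \<Rightarrow> nat \<Rightarrow> (nat \<Rightarrow> 'a) \<Rightarrow> bool" where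
  "is_unit_of c n u \<longleftrightarrow> u \<in> vspace n \<and>
     (\<forall>x\<in>vspace n. amult c n u x = x \<and> amult c n x u = x)"

definition lspan :: "(nat \<Rightarrow> 'a::field) set \<Rightarrow> (nat \<Rightarrow> 'a) set" where
  "lspan X = {x. \<exists>T f. finite T \<and> T \<subseteq> X \<and> x = (\<lambda>k. \<Sum>t\<in>T. f t * t k)}"

text \<open>word c n u S k w: w is a word of length k in S (any bracketing); u (the unit) is the
word of length 0.\<close>
inductive word :: "(nat \<Rightarrow> nat \<Rightarrow> nat \<Rightarrow> 'a::field) \<Rightarrow> nat \<Rightarrow> (nat \<Rightarrow> 'a) \<Rightarrow> (nat \<Rightarrow> 'a) set
    \<Rightarrow> nat \<Rightarrow> (nat \<Rightarrow> 'a) \<Rightarrow> bool"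
  for c n u S where
  word_one: "word c n u S 0 u"
| word_gen: "s \<in> S \<Longrightarrow> word c n u S 1 s"
| word_mul: "word c n u S a x \<Longrightarrow> word c n u S b y \<Longrightarrow> word c n u S (a + b) (amult c n x y)"

definition Lspace :: "(nat \<Rightarrow> nat \<Rightarrow> nat \<Rightarrow> 'a::field) \<Rightarrow> nat \<Rightarrow> (nat \<Rightarrow> 'a) \<Rightarrow> (nat \<Rightarrow> 'a) set
    \<Rightarrow> nat \<Rightarrow> (nat \<Rightarrow> 'a) set" where
  "Lspace c n u S i = lspan {w. \<exists>k\<le>i. word c n u S k w}"

definition generating_set :: "(nat \<Rightarrow> nat \<Rightarrow> nat \<Rightarrow> 'a::field) \<Rightarrow> nat \<Rightarrow> (nat \<Rightarrow> 'a) \<Rightarrow> (nat \<Rightarrow> 'a) set \<Rightarrow> bool" where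
  "generating_set c n u S \<longleftrightarrow> finite S \<and> S \<subseteq> vspace n \<and> (\<exists>k. Lspace c n u S k = vspace n)"

definition set_length :: "(nat \<Rightarrow> nat \<Rightarrow> nat \<Rightarrow> 'a::field) \<Rightarrow> nat \<Rightarrow> (nat \<Rightarrow> 'a) \<Rightarrow> (nat \<Rightarrow> 'a) set \<Rightarrow> nat" where
  "set_length c n u S = (LEAST k. Lspace c n u S k = vspace n)"

definition alg_length :: "(nat \<Rightarrow> nat \<Rightarrow> nat \<Rightarrow> 'a::field) \<Rightarrow> nat \<Rightarrow> (nat \<Rightarrow> 'a) \<Rightarrow> nat" where
  "alg_length c n u = Max {set_length c n u S | S. generating_set c n u S}"

end

(*
  The algebra has basis e_0, ..., e_(n-1), unit e_0, products e_i e_i = e_(i+1) for 1 <= i <= h,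
  and all other products of non-unit basis vectors zero.

  Generated by e_1 and e_(h+2), ..., e_(n-1), every word is zero or a basis vector, and e_(h+1)
  only arises as the word of length 2^h obtained by repeatedly squaring e_1.

  Conversely let S be any generating set and I_t the span of e_(t+1), ..., e_(h+1). Modulo I_1,
  a product x y is the linear expression x_0 y + y_0 x - x_0 y_0 e_0, so L_1(S) + I_1 is closed
  under multiplication and hence is the whole algebra. If A = L_(2^t)(S) + I_(t+1) with t < h,
  write e_(t+1) = w + z with w in L_(2^t)(S) and z in I_(t+1): then w w lies in L_(2^(t+1))(S)
  and is congruent to e_(t+2) modulo I_(t+2), so A = L_(2^(t+1))(S) + I_(t+2). For t = h this
  reads A = L_(2^h)(S).
*)

theory Submission
  imports Defs "HOL.Vector_Spaces" "HOL-Library.Function_Algebras"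
begin

interpretation coord: vector_space "\<lambda>(a::'a::field) (x::nat \<Rightarrow> 'a) k. a * x k"
  by unfold_locales (auto simp: fun_eq_iff algebra_simps)

lemma sum_fun_apply: "(\<Sum>a\<in>A. f a) x = (\<Sum>a\<in>A. f a x)"
  by (induction A rule: infinite_finite_induct) auto

lemma lspan_eq_span: "lspan X = coord.span X"
  unfolding lspan_def coord.span_explicit by (auto simp: fun_eq_iff sum_fun_apply)

lemma subspace_vspace: "coord.subspace (vspace n)"
  unfolding coord.subspace_def vspace_def by auto

definition basis_vec :: "nat \<Rightarrow> nat \<Rightarrow> 'a::zero_neq_one" where
  "basis_vec i k = (if k = i then 1 else 0)"

lemma basis_vec_in_vspace: "i < n \<Longrightarrow> basis_vec i \<in> vspace n"
  unfolding basis_vec_def vspace_def by auto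

lemma vspace_subset_subspace:
  assumes W: "coord.subspace W" and basis: "\<And>i. i < n \<Longrightarrow> basis_vec i \<in> W"
  shows "vspace n \<subseteq> W"
proof
  fix x :: "nat \<Rightarrow> 'a" assume x: "x \<in> vspace n"
  have "x = (\<Sum>i<n. (\<lambda>k. x i * basis_vec i k))"
    using x unfolding fun_eq_iff sum_fun_apply basis_vec_def vspace_def
    by (simp add: if_distrib cong: if_cong)
  also have "\<dots> \<in> W"
    by (intro coord.subspace_sum[OF W] coord.subspace_scale[OF W] basis) simp
  finally show "x \<in> W" .
qed

lemma amult_in_vspace: "amult c n x y \<in> vspace n"
  unfolding amult_def vspace_def by auto

lemma amult_zero_left [simp]: "amult c n 0 y = 0"
  unfolding amult_def by (simp add: fun_eq_iff)

lemma amult_zero_right [simp]: "amult c n x 0 = 0"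
  unfolding amult_def by (simp add: fun_eq_iff)

lemma subspace_amult_preimage_left:
  assumes W: "coord.subspace W"
  shows "coord.subspace {x. amult c n x y \<in> W}"
proof -
  have "amult c n (x + x') y = amult c n x y + amult c n x' y" for x x'
    by (auto simp: amult_def fun_eq_iff algebra_simps sum.distrib)
  moreover have "amult c n (\<lambda>k. a * x k) y = (\<lambda>k. a * amult c n x y k)" for a x
    by (auto simp: amult_def fun_eq_iff sum_distrib_left mult_ac)
  ultimately show ?thesis
    using coord.subspace_0[OF W] coord.subspace_add[OF W] coord.subspace_scale[OF W]
    by (simp add: coord.subspace_def)
qed

lemma subspace_amult_preimage_right:
  assumes W: "coord.subspace W"
  shows "coord.subspace {y. amult c n x y \<in> W}"
proof -
  have "amult c n x (y + y') = amult c n x y + amult c n x y'" for y y'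
    by (auto simp: amult_def fun_eq_iff algebra_simps sum.distrib)
  moreover have "amult c n x (\<lambda>k. a * y k) = (\<lambda>k. a * amult c n x y k)" for a y
    by (auto simp: amult_def fun_eq_iff sum_distrib_left mult_ac)
  ultimately show ?thesis
    using coord.subspace_0[OF W] coord.subspace_add[OF W] coord.subspace_scale[OF W]
    by (simp add: coord.subspace_def)
qed

lemma word_in_vspace:
  "word c n u S k w \<Longrightarrow> S \<subseteq> vspace n \<Longrightarrow> u \<in> vspace n \<Longrightarrow> w \<in> vspace n"
  by (induction rule: word.induct) (auto simp: amult_in_vspace)

lemma Lspace_eq_span: "Lspace c n u S i = coord.span {w. \<exists>k\<le>i. word c n u S k w}"
  unfolding Lspace_def lspan_eq_span ..

lemma subspace_Lspace: "coord.subspace (Lspace c n u S i)"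
  unfolding Lspace_eq_span by (rule coord.subspace_span)

lemma word_in_Lspace: "word c n u S k w \<Longrightarrow> k \<le> i \<Longrightarrow> w \<in> Lspace c n u S i"
  unfolding Lspace_eq_span by (rule coord.span_base) blast

lemma Lspace_mono: "i \<le> j \<Longrightarrow> Lspace c n u S i \<subseteq> Lspace c n u S j"
  unfolding Lspace_eq_span by (rule coord.span_mono) (blast intro: order_trans)

lemma Lspace_subset_vspace:
  "S \<subseteq> vspace n \<Longrightarrow> u \<in> vspace n \<Longrightarrow> Lspace c n u S i \<subseteq> vspace n"
  unfolding Lspace_eq_span
  by (rule coord.span_minimal[OF _ subspace_vspace]) (auto intro: word_in_vspace)

lemma amult_Lspace:
  assumes x: "x \<in> Lspace c n u S a" and y: "y \<in> Lspace c n u S b"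
  shows "amult c n x y \<in> Lspace c n u S (a + b)"
proof -
  have "amult c n w y \<in> Lspace c n u S (a + b)" if w: "word c n u S k w" "k \<le> a" for w k
  proof -
    have "{v. \<exists>l\<le>b. word c n u S l v} \<subseteq> {v. amult c n w v \<in> Lspace c n u S (a + b)}"
      using w by (auto intro!: word_in_Lspace word.word_mul)
    then have "Lspace c n u S b \<subseteq> {v. amult c n w v \<in> Lspace c n u S (a + b)}"
      unfolding Lspace_eq_span[of c n u S b]
      by (rule coord.span_minimal[OF _ subspace_amult_preimage_right[OF subspace_Lspace]])
    then show ?thesis using y by blast
  qed
  then have "Lspace c n u S a \<subseteq> {v. amult c n v y \<in> Lspace c n u S (a + b)}"
    unfolding Lspace_eq_span[of c n u S a]
    by (intro coord.span_minimal[OF _ subspace_amult_preimage_left[OF subspace_Lspace]]) blast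
  then show ?thesis using x by blast
qed

lemma Lspace_subset_subalgebra:
  assumes W: "coord.subspace W" and "u \<in> W" "S \<subseteq> W"
    and closed: "\<And>x y. x \<in> W \<Longrightarrow> y \<in> W \<Longrightarrow> amult c n x y \<in> W"
  shows "Lspace c n u S i \<subseteq> W"
proof -
  have "w \<in> W" if "word c n u S k w" for k w
    using that by (induction rule: word.induct) (use assms in blast)+
  then show ?thesis
    unfolding Lspace_eq_span by (intro coord.span_minimal[OF _ W]) blast
qed

lemma alg_length_eqI:
  assumes gen: "generating_set c n u S\<^sub>0"
    and full: "Lspace c n u S\<^sub>0 m = vspace n"
    and proper: "\<And>k. k < m \<Longrightarrow> Lspace c n u S\<^sub>0 k \<noteq> vspace n"
    and upper: "\<And>S. generating_set c n u S \<Longrightarrow> Lspace c n u S m = vspace n"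
  shows "alg_length c n u = m"
proof -
  let ?lengths = "{set_length c n u S | S. generating_set c n u S}"
  have le: "l \<le> m" if "l \<in> ?lengths" for l
  proof -
    from that obtain S where "l = set_length c n u S" "generating_set c n u S" by blast
    with upper show ?thesis unfolding set_length_def by (simp add: Least_le)
  qed
  have "set_length c n u S\<^sub>0 = m"
    unfolding set_length_def
  proof (rule Least_equality)
    show "m \<le> k" if "Lspace c n u S\<^sub>0 k = vspace n" for k
      using proper[of k] that by (cases "k < m") auto
  qed (rule full)
  with gen have "m \<in> ?lengths" by blast
  moreover have "finite ?lengths"
    using le by (intro finite_subset[OF _ finite_atMost[of m]]) blast
  ultimately show ?thesis
    unfolding alg_length_def using le by (intro Max_eqI)
qed

definition sq_chain :: "nat \<Rightarrow> nat \<Rightarrow> nat \<Rightarrow> nat \<Rightarrow> 'a::field" where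
  "sq_chain h i j k = (if i = 0 then of_bool (j = k) else if j = 0 then of_bool (i = k)
     else of_bool (i = j \<and> i \<le> h \<and> k = Suc i))"

lemma sum_sq_chain_row:
  assumes "k < n"
  shows "(\<Sum>j<n. x i * y j * sq_chain h i j k) =
    (if i = 0 then x 0 * y k else 0) + (if i = k then (if k = 0 then 0 else x k * y 0) else 0)
    + (if Suc i = k then (if i \<noteq> 0 \<and> i \<le> h then x i * y i else 0) else 0)"
proof (cases "i = 0")
  case False
  have "x i * y j * sq_chain h i j k = (if j = 0 then of_bool (i = k) * x i * y 0 else 0)
      + (if j = i then of_bool (i \<le> h \<and> k = Suc i) * x i * y i else 0)" for j
    using False by (simp add: sq_chain_def)
  then show ?thesis using assms False by (auto simp: sum.distrib)
qed (use assms in \<open>auto simp: sq_chain_def\<close>)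

lemma amult_sq_chain:
  assumes "x \<in> vspace n" "y \<in> vspace n" "Suc h < n"
  shows "amult (sq_chain h) n x y k = x 0 * y k + (if k = 0 then 0 else x k * y 0)
    + (if 2 \<le> k \<and> k \<le> Suc h then x (k - 1) * y (k - 1) else 0)"
proof (cases "k < n")
  case True
  then show ?thesis by (cases k) (auto simp: amult_def sum_sq_chain_row sum.distrib)
qed (use assms in \<open>auto simp: amult_def vspace_def\<close>)

lemma is_unit_sq_chain: "Suc h < n \<Longrightarrow> is_unit_of (sq_chain h) n (basis_vec 0)"
  unfolding is_unit_of_def
  by (auto simp: fun_eq_iff amult_sq_chain basis_vec_in_vspace basis_vec_def)

lemma amult_sq_chain_basis_vec:
  assumes "i < n" "j < n" "Suc h < n"
  shows "amult (sq_chain h) n (basis_vec i) (basis_vec j) =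
    (if i = 0 then basis_vec j else if j = 0 then basis_vec i
     else if i = j \<and> i \<le> h then basis_vec (Suc i) else 0)"
  using assms by (auto simp: fun_eq_iff amult_sq_chain basis_vec_in_vspace basis_vec_def)

subsection \<open>A generating set of length 2^h\<close>

definition chain_gens :: "nat \<Rightarrow> nat \<Rightarrow> (nat \<Rightarrow> 'a::field) set" where
  "chain_gens h n = basis_vec ` ({1} \<union> {Suc (Suc h)..<n})"

definition chain_weight :: "nat \<Rightarrow> nat \<Rightarrow> nat" where
  "chain_weight h i = (if i = 0 then 0 else if i \<le> Suc h then 2 ^ (i - 1) else 1)"

lemma chain_gens_subset_vspace:
  "Suc h < n \<Longrightarrow> chain_gens h n \<subseteq> vspace n"
  unfolding chain_gens_def by (auto intro: basis_vec_in_vspace)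

lemma word_chain_gens:
  assumes "word (sq_chain h) n (basis_vec 0) (chain_gens h n) k w" and hn: "Suc h < n"
  shows "w = 0 \<or> (\<exists>i<n. w = basis_vec i \<and> chain_weight h i = k)"
  using assms(1)
proof (induction rule: word.induct)
  case word_one
  have "0 < n" "chain_weight h 0 = 0" using hn by (auto simp: chain_weight_def)
  then show ?case by blast
next
  case (word_gen s)
  then obtain i where i: "i \<in> {1} \<union> {Suc (Suc h)..<n}" "s = basis_vec i"
    unfolding chain_gens_def by blast
  then have "i < n" "chain_weight h i = 1" using hn by (auto simp: chain_weight_def)
  with i show ?case by blast
next
  case (word_mul a x b y)
  show ?case
  proof (cases "x = 0 \<or> y = 0")
    case False
    then obtain i j where ij: "i < n" "j < n" "x = basis_vec i" "y = basis_vec j"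
      and a: "chain_weight h i = a" and b: "chain_weight h j = b"
      using word_mul.IH by blast
    consider "i = 0" | "i \<noteq> 0" "j = 0" | "i \<noteq> 0" "i = j" "i \<le> h"
      | "amult (sq_chain h) n x y = 0"
      using ij hn by (cases "i = 0"; cases "j = 0"; cases "i = j \<and> i \<le> h")
        (simp_all add: amult_sq_chain_basis_vec)
    then show ?thesis
    proof cases
      case 1
      then have "amult (sq_chain h) n x y = y" "a = 0"
        using ij a hn by (simp_all add: amult_sq_chain_basis_vec chain_weight_def)
      then show ?thesis using ij b by auto
    next
      case 2
      then have "amult (sq_chain h) n x y = x" "b = 0"
        using ij b hn by (simp_all add: amult_sq_chain_basis_vec chain_weight_def)
      then show ?thesis using ij a by auto
    next
      case 3
      then obtain m where "i = Suc m" "j = Suc m" by (cases i) auto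
      then have "chain_weight h (Suc i) = a + b"
        using 3 a b by (simp add: chain_weight_def)
      moreover have "amult (sq_chain h) n x y = basis_vec (Suc i)" "Suc i < n"
        using 3 ij hn by (simp_all add: amult_sq_chain_basis_vec)
      ultimately show ?thesis by blast
    qed simp
  qed auto
qed

lemma basis_vec_notin_Lspace_chain_gens:
  assumes "k < 2 ^ h" "Suc h < n"
  shows "basis_vec (Suc h) \<notin> Lspace (sq_chain h) n (basis_vec 0) (chain_gens h n) k"
proof -
  let ?H = "{x :: nat \<Rightarrow> 'a. x (Suc h) = 0}"
  have "w \<in> ?H" if "word (sq_chain h) n (basis_vec 0) (chain_gens h n) l w" "l \<le> k" for l w
    using word_chain_gens[OF that(1) assms(2)] that(2) assms(1)
    by (auto simp: basis_vec_def chain_weight_def)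
  moreover have "coord.subspace ?H"
    by (simp add: coord.subspace_def)
  ultimately have "Lspace (sq_chain h) n (basis_vec 0) (chain_gens h n) k \<subseteq> ?H"
    unfolding Lspace_eq_span by (intro coord.span_minimal) blast+
  then show ?thesis by (auto simp: basis_vec_def)
qed

lemma word_chain_gens_basis_vec:
  assumes "t \<le> h" "Suc h < n"
  shows "word (sq_chain h) n (basis_vec 0) (chain_gens h n) (2 ^ t) (basis_vec (Suc t))"
  using assms(1)
proof (induction t)
  case 0
  have "basis_vec 1 \<in> chain_gens h n" by (simp add: chain_gens_def)
  then show ?case using word.word_gen by fastforce
next
  case (Suc t)
  have "word (sq_chain h) n (basis_vec 0) (chain_gens h n) (2 ^ t + 2 ^ t)
      (amult (sq_chain h) n (basis_vec (Suc t)) (basis_vec (Suc t) :: nat \<Rightarrow> 'a))"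
    using Suc by (intro word.word_mul) auto
  then show ?case
    using Suc.prems assms(2) by (simp add: amult_sq_chain_basis_vec mult_2)
qed

lemma Lspace_chain_gens:
  assumes hn: "Suc h < n"
  shows "Lspace (sq_chain h) n (basis_vec 0) (chain_gens h n) (2 ^ h) = vspace n"
proof
  show "Lspace (sq_chain h) n (basis_vec 0) (chain_gens h n) (2 ^ h) \<subseteq> vspace n"
    using hn by (intro Lspace_subset_vspace chain_gens_subset_vspace basis_vec_in_vspace) auto
  have "basis_vec i \<in> Lspace (sq_chain h) n (basis_vec 0) (chain_gens h n) (2 ^ h)"
    if "i < n" for i
  proof -
    consider "i = 0" | "1 \<le> i" "i \<le> Suc h" | "Suc h < i" by linarith
    then show ?thesis
    proof cases
      case 1
      then show ?thesis by (auto intro: word_in_Lspace word.word_one)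
    next
      case 2
      then have "2 ^ (i - 1) \<le> (2::nat) ^ h" by (intro power_increasing) auto
      then show ?thesis
        using 2 word_chain_gens_basis_vec[of "i - 1" h n] hn by (auto intro: word_in_Lspace)
    next
      case 3
      then have "basis_vec i \<in> chain_gens h n" using \<open>i < n\<close> by (auto simp: chain_gens_def)
      then show ?thesis by (auto intro: word_in_Lspace word.word_gen)
    qed
  qed
  then show "vspace n \<subseteq> Lspace (sq_chain h) n (basis_vec 0) (chain_gens h n) (2 ^ h)"
    by (intro vspace_subset_subspace subspace_Lspace)
qed

lemma generating_set_chain_gens:
  assumes hn: "Suc h < n"
  shows "generating_set (sq_chain h) n (basis_vec 0) (chain_gens h n)"
proof -
  have "finite (chain_gens h n)" by (simp add: chain_gens_def)
  with chain_gens_subset_vspace[OF hn] Lspace_chain_gens[OF hn] show ?thesis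
    unfolding generating_set_def by blast
qed

subsection \<open>Every generating set has length at most 2^h\<close>

text \<open>The space I_t of the proof idea.\<close>
definition chain_tail :: "nat \<Rightarrow> nat \<Rightarrow> (nat \<Rightarrow> 'a::zero) set" where
  "chain_tail h t = {z. \<forall>i. i \<le> t \<or> Suc h < i \<longrightarrow> z i = 0}"

lemma subspace_chain_tail: "coord.subspace (chain_tail h t)"
  unfolding coord.subspace_def chain_tail_def by auto

lemma chain_tail_subset_vspace: "Suc h < n \<Longrightarrow> chain_tail h t \<subseteq> vspace n"
  unfolding chain_tail_def vspace_def by force

lemma chain_tail_top: "chain_tail h (Suc h) = {0}"
  unfolding chain_tail_def by (auto simp: fun_eq_iff not_less[symmetric])

lemma chain_tail_subset_span_insert:
  "chain_tail h t \<subseteq> coord.span (insert (basis_vec (Suc t)) (chain_tail h (Suc t)))"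
proof
  fix z :: "nat \<Rightarrow> 'a" assume "z \<in> chain_tail h t"
  then have "z - (\<lambda>k. z (Suc t) * basis_vec (Suc t) k) \<in> chain_tail h (Suc t)"
    by (auto simp: chain_tail_def basis_vec_def Suc_le_eq)
  then show "z \<in> coord.span (insert (basis_vec (Suc t)) (chain_tail h (Suc t)))"
    unfolding coord.span_breakdown_eq coord.span_eq_iff[THEN iffD2, OF subspace_chain_tail]
    by blast
qed

lemma amult_sq_chain_mod_tail:
  assumes "x \<in> vspace n" "y \<in> vspace n" "Suc h < n"
  shows "amult (sq_chain h) n x y
    - ((\<lambda>k. x 0 * y k) + (\<lambda>k. y 0 * x k) - (\<lambda>k. x 0 * y 0 * basis_vec 0 k)) \<in> chain_tail h 1"
  unfolding chain_tail_def
proof (intro CollectI allI impI)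
  fix i :: nat assume "i \<le> 1 \<or> Suc h < i"
  then have "\<not> (2 \<le> i \<and> i \<le> Suc h)" by auto
  then show "(amult (sq_chain h) n x y
      - ((\<lambda>k. x 0 * y k) + (\<lambda>k. y 0 * x k) - (\<lambda>k. x 0 * y 0 * basis_vec 0 k))) i = 0"
    using assms by (cases "i = 0") (auto simp: amult_sq_chain basis_vec_def mult.commute)
qed

lemma amult_sq_chain_closed:
  assumes W: "coord.subspace W" and "W \<subseteq> vspace n" "basis_vec 0 \<in> W" "chain_tail h 1 \<subseteq> W"
    and hn: "Suc h < n" and x: "x \<in> W" and y: "y \<in> W"
  shows "amult (sq_chain h) n x y \<in> W"
proof -
  let ?lin = "(\<lambda>k. x 0 * y k) + (\<lambda>k. y 0 * x k) - (\<lambda>k. x 0 * y 0 * basis_vec 0 k)"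
  have "?lin \<in> W"
    using assms by (intro coord.subspace_diff coord.subspace_add coord.subspace_scale) auto
  moreover have "amult (sq_chain h) n x y - ?lin \<in> W"
    using amult_sq_chain_mod_tail[of x n y h] assms by blast
  ultimately have "(amult (sq_chain h) n x y - ?lin) + ?lin \<in> W"
    by (rule coord.subspace_add[OF W, rotated])
  then show ?thesis by simp
qed

lemma amult_sq_chain_square:
  assumes w: "w \<in> vspace n" and hn: "Suc h < n" and s: "0 < s" "s \<le> h"
    and near: "w - basis_vec s \<in> chain_tail h s"
  shows "amult (sq_chain h) n w w - basis_vec (Suc s) \<in> chain_tail h (Suc s)"
  unfolding chain_tail_def
proof (intro CollectI allI impI)
  fix i assume i: "i \<le> Suc s \<or> Suc h < i"
  have low: "w l = basis_vec s l" if "l \<le> s" for l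
    using near that by (auto simp: chain_tail_def)
  have "w 0 = 0" using low[of 0] s by (simp add: basis_vec_def)
  then have "amult (sq_chain h) n w w i = (if 2 \<le> i \<and> i \<le> Suc h then w (i - 1) * w (i - 1) else 0)"
    using w hn by (simp add: amult_sq_chain)
  moreover have "w (i - 1) = basis_vec s (i - 1)" if "2 \<le> i" "i \<le> Suc h"
    using i that by (intro low) auto
  ultimately show "(amult (sq_chain h) n w w - basis_vec (Suc s)) i = 0"
    using i s by (auto simp: basis_vec_def)
qed

lemma vspace_subset_Lspace_1_tail:
  assumes gen: "generating_set (sq_chain h) n (basis_vec 0) S" and hn: "Suc h < n"
  shows "vspace n \<subseteq> coord.span (Lspace (sq_chain h) n (basis_vec 0) S 1 \<union> chain_tail h 1)"
proof -
  let ?L = "Lspace (sq_chain h) n (basis_vec 0) S"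
  let ?W = "coord.span (?L 1 \<union> chain_tail h 1)"
  from gen obtain k where S: "S \<subseteq> vspace n" and full: "?L k = vspace n"
    unfolding generating_set_def by blast
  have e0: "basis_vec 0 \<in> vspace n" using hn by (simp add: basis_vec_in_vspace)
  have W: "?W \<subseteq> vspace n"
    using Lspace_subset_vspace[OF S e0] chain_tail_subset_vspace[OF hn]
    by (intro coord.span_minimal subspace_vspace) blast
  have L1: "?L 1 \<subseteq> ?W" "chain_tail h 1 \<subseteq> ?W"
    using coord.span_superset by blast+
  have "basis_vec 0 \<in> ?L 1" "S \<subseteq> ?L 1"
    by (auto intro: word_in_Lspace word.intros)
  then have "?L k \<subseteq> ?W"
  proof (intro Lspace_subset_subalgebra[OF coord.subspace_span])
    show "amult (sq_chain h) n x y \<in> ?W" if "x \<in> ?W" "y \<in> ?W" for x y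
      using that W L1 \<open>basis_vec 0 \<in> ?L 1\<close> hn
      by (intro amult_sq_chain_closed[OF coord.subspace_span]) blast+
  qed (use L1 in blast)+
  with full show ?thesis by simp
qed

lemma vspace_subset_Lspace_tail_Suc:
  assumes S: "S \<subseteq> vspace n" and hn: "Suc h < n" and t: "t < h"
    and IH: "vspace n \<subseteq> coord.span (Lspace (sq_chain h) n (basis_vec 0) S (2 ^ t) \<union> chain_tail h (Suc t))"
  shows "vspace n \<subseteq>
    coord.span (Lspace (sq_chain h) n (basis_vec 0) S (2 ^ Suc t) \<union> chain_tail h (Suc (Suc t)))"
proof -
  let ?L = "Lspace (sq_chain h) n (basis_vec 0) S"
  let ?W = "coord.span (?L (2 ^ Suc t) \<union> chain_tail h (Suc (Suc t)))"
  have "basis_vec (Suc t) \<in> vspace n" using hn t by (simp add: basis_vec_in_vspace)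
  with IH obtain w z where w: "w \<in> ?L (2 ^ t)" and z: "z \<in> chain_tail h (Suc t)"
    and e: "basis_vec (Suc t) = w + z"
    unfolding coord.span_Un coord.span_eq_iff[THEN iffD2, OF subspace_Lspace]
      coord.span_eq_iff[THEN iffD2, OF subspace_chain_tail] by blast
  have "?L (2 ^ t) \<subseteq> vspace n"
    using hn by (intro Lspace_subset_vspace[OF S] basis_vec_in_vspace) simp
  with w have "w \<in> vspace n" by blast
  moreover have "w - basis_vec (Suc t) \<in> chain_tail h (Suc t)"
    using coord.subspace_neg[OF subspace_chain_tail z] by (simp add: e)
  ultimately have "amult (sq_chain h) n w w - basis_vec (Suc (Suc t)) \<in> chain_tail h (Suc (Suc t))"
    using hn t by (intro amult_sq_chain_square) auto
  moreover have "amult (sq_chain h) n w w \<in> ?L (2 ^ Suc t)"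
    using amult_Lspace[OF w w] by (simp add: mult_2)
  ultimately have "amult (sq_chain h) n w w - (amult (sq_chain h) n w w - basis_vec (Suc (Suc t))) \<in> ?W"
    by (intro coord.span_diff coord.span_base) auto
  then have "insert (basis_vec (Suc (Suc t))) (chain_tail h (Suc (Suc t))) \<subseteq> ?W"
    using coord.span_superset[of "?L (2 ^ Suc t) \<union> chain_tail h (Suc (Suc t))"] by simp
  then have "coord.span (insert (basis_vec (Suc (Suc t))) (chain_tail h (Suc (Suc t)))) \<subseteq> ?W"
    by (rule coord.span_minimal[OF _ coord.subspace_span])
  then have "chain_tail h (Suc t) \<subseteq> ?W"
    using chain_tail_subset_span_insert[of h "Suc t"] by (rule subset_trans[rotated])
  moreover have "?L (2 ^ t) \<subseteq> ?W"
    using Lspace_mono[of "2 ^ t" "2 ^ Suc t" "sq_chain h" n "basis_vec 0" S]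
      coord.span_superset[of "?L (2 ^ Suc t) \<union> chain_tail h (Suc (Suc t))"] by auto
  ultimately have "coord.span (?L (2 ^ t) \<union> chain_tail h (Suc t)) \<subseteq> ?W"
    by (intro coord.span_minimal coord.subspace_span Un_least)
  with IH show ?thesis by (rule subset_trans)
qed

lemma vspace_subset_Lspace_tail:
  assumes gen: "generating_set (sq_chain h) n (basis_vec 0) S" and hn: "Suc h < n"
  shows "t \<le> h \<Longrightarrow>
    vspace n \<subseteq> coord.span (Lspace (sq_chain h) n (basis_vec 0) S (2 ^ t) \<union> chain_tail h (Suc t))"
proof (induction t)
  case 0
  then show ?case using vspace_subset_Lspace_1_tail[OF gen hn] by simp
next
  case (Suc t)
  with gen hn show ?case
    by (intro vspace_subset_Lspace_tail_Suc) (auto simp: generating_set_def)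
qed

lemma Lspace_sq_chain:
  assumes gen: "generating_set (sq_chain h) n (basis_vec 0) S" and hn: "Suc h < n"
  shows "Lspace (sq_chain h) n (basis_vec 0) S (2 ^ h) = vspace n"
proof
  have "Lspace (sq_chain h) n (basis_vec 0) S (2 ^ h) \<union> chain_tail h (Suc h)
      = Lspace (sq_chain h) n (basis_vec 0) S (2 ^ h)"
    using coord.subspace_0[OF subspace_Lspace] by (auto simp: chain_tail_top)
  then show "vspace n \<subseteq> Lspace (sq_chain h) n (basis_vec 0) S (2 ^ h)"
    using vspace_subset_Lspace_tail[OF gen hn order.refl]
    by (simp add: coord.span_eq_iff[THEN iffD2, OF subspace_Lspace])
  show "Lspace (sq_chain h) n (basis_vec 0) S (2 ^ h) \<subseteq> vspace n"
    using gen hn by (intro Lspace_subset_vspace basis_vec_in_vspace) (auto simp: generating_set_def)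
qed

theorem proposition3p8:
  fixes n h :: nat
  assumes "n \<ge> 2" and "h \<le> n - 2"
  shows "\<exists>(c :: nat \<Rightarrow> nat \<Rightarrow> nat \<Rightarrow> 'a::field) u.
           is_unit_of c n u \<and> alg_length c n u = 2 ^ h"
proof -
  have hn: "Suc h < n" using assms by linarith
  have "alg_length (sq_chain h) n (basis_vec 0 :: nat \<Rightarrow> 'a) = 2 ^ h"
  proof (rule alg_length_eqI[OF generating_set_chain_gens[OF hn] Lspace_chain_gens[OF hn]])
    show "Lspace (sq_chain h) n (basis_vec 0) (chain_gens h n) k \<noteq> vspace n" if "k < 2 ^ h" for k
      using basis_vec_notin_Lspace_chain_gens[OF that hn] basis_vec_in_vspace[OF hn] by blast
    show "Lspace (sq_chain h) n (basis_vec 0) S (2 ^ h) = vspace n"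
      if "generating_set (sq_chain h) n (basis_vec 0) S" for S
      using Lspace_sq_chain[OF that hn] .
  qed
  with is_unit_sq_chain[OF hn] show ?thesis by blast
qed

end
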